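(* For any $\epsilon>0$ and any positive integer $r$, there exist a graph $G$ with $\Delta(G)=r$ and a tree $T$, each with $n$ vertices (for some $n$), such that $3\Delta(G)+\ell(T)-2<(1+\epsilon)n$, but $G$ and $T$ do not pack.
   Context: All graphs are finite and simple; $\Delta(G)$ is the maximum degree of $G$ and $\ell(T)$ is the number of leaves (vertices of degree $1$) of $T$. For graphs $G$ and $H$ with $|V(G)|\ge |V(H)|$, we say $G$ and $H$ pack if there is an injective function $f:V(H)\to V(G)$ such that for every edge $xy\in E(H)$, $f(x)f(y)\notin E(G)$. *)

theory Defs
  imports Main "HOL-Library.Disjoint_Sets" Complex_Main
begin

definition sgraph :: "'a set \<Rightarrow> 'a set set \<Rightarrow> bool" where
  "sgraph V E \<longleftrightarrow> finite V \<and> (\<forall>e\<in>E. \<exists>x y. x \<noteq> y \<and> x \<in> V \<and> y \<in> V \<and> e = {x, y})"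

definition adj :: "'a set set \<Rightarrow> 'a \<Rightarrow> 'a \<Rightarrow> bool" where
  "adj E x y \<longleftrightarrow> {x, y} \<in> E"

definition degree :: "'a set \<Rightarrow> 'a set set \<Rightarrow> 'a \<Rightarrow> nat" where
  "degree V E v = card {u \<in> V. {u, v} \<in> E}"

definition max_degree :: "'a set \<Rightarrow> 'a set set \<Rightarrow> nat" where
  "max_degree V E = Max (degree V E ` V)"

definition num_leaves :: "'a set \<Rightarrow> 'a set set \<Rightarrow> nat" where
  "num_leaves V E = card {v \<in> V. degree V E v = 1}"

definition connected_graph :: "'a set \<Rightarrow> 'a set set \<Rightarrow> bool" where
  "connected_graph V E \<longleftrightarrow> (\<forall>x\<in>V. \<forall>y\<in>V. (adj E)\<^sup>*\<^sup>* x y)"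

definition is_cycle :: "'a set \<Rightarrow> 'a set set \<Rightarrow> 'a list \<Rightarrow> bool" where
  "is_cycle V E cs \<longleftrightarrow> length cs \<ge> 3 \<and> distinct cs \<and> set cs \<subseteq> V \<and>
     (\<forall>i. Suc i < length cs \<longrightarrow> adj E (cs ! i) (cs ! Suc i)) \<and>
     adj E (last cs) (hd cs)"

definition acyclic_graph :: "'a set \<Rightarrow> 'a set set \<Rightarrow> bool" where
  "acyclic_graph V E \<longleftrightarrow> \<not> (\<exists>cs. is_cycle V E cs)"

definition is_tree :: "'a set \<Rightarrow> 'a set set \<Rightarrow> bool" where
  "is_tree V E \<longleftrightarrow> sgraph V E \<and> V \<noteq> {} \<and> connected_graph V E \<and> acyclic_graph V E"

definition packs :: "'a set \<Rightarrow> 'a set set \<Rightarrow> 'b set \<Rightarrow> 'b set set \<Rightarrow> bool" where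
  "packs VG EG VH EH \<longleftrightarrow>
     (\<exists>f. inj_on f VH \<and> f ` VH \<subseteq> VG \<and> (\<forall>x\<in>VH. \<forall>y\<in>VH. {x, y} \<in> EH \<longrightarrow> {f x, f y} \<notin> EG))"

end

theory Submission
  imports Defs
begin

text \<open>Take \<open>G\<close> to be \<open>m\<close> disjoint copies of \<open>K\<^sub>r\<^sub>+\<^sub>1\<close> and \<open>T\<close> the star on the same
  \<open>n = m(r+1)\<close> vertices. The centre of the star is adjacent to every other vertex of \<open>T\<close>,
  so wherever it is placed in \<open>G\<close>, a neighbour of its image is the image of a leaf, and the
  packing fails. On the other hand \<open>3\<Delta>(G) + \<ell>(T) - 2 < 3r + n\<close>, which is below
  \<open>(1+\<epsilon>)n\<close> once \<open>m > 3r/\<epsilon>\<close>.\<close>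

lemma acyclic_graph_if_edges_meet_vertex:
  assumes "\<And>e. e \<in> E \<Longrightarrow> c \<in> e"
  shows "acyclic_graph V E"
  unfolding acyclic_graph_def
proof
  assume "\<exists>cs. is_cycle V E cs"
  then obtain cs where len: "length cs \<ge> 3" and dist: "distinct cs"
    and step: "\<And>i. Suc i < length cs \<Longrightarrow> adj E (cs ! i) (cs ! Suc i)"
    and close: "adj E (last cs) (hd cs)"
    by (auto simp: is_cycle_def)
  have centre: "x = c \<or> y = c" if "adj E x y" for x y
    using assms[of "{x, y}"] that by (auto simp: adj_def)
  have ne: "cs ! i \<noteq> cs ! j" if "i < length cs" "j < length cs" "i \<noteq> j" for i j
    using dist that nth_eq_iff_index_eq by blast
  have "cs \<noteq> []" using len by auto
  show False
  proof (cases "cs ! 0 = c")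
    case True
    then have "cs ! 1 \<noteq> c" "cs ! 2 \<noteq> c"
      using ne[of 0 1] ne[of 0 2] len \<open>cs \<noteq> []\<close> by auto
    moreover have "adj E (cs ! 1) (cs ! 2)"
      using step[of 1] len by (simp add: numeral_2_eq_2)
    ultimately show False using centre by blast
  next
    case False
    moreover have "adj E (cs ! 0) (cs ! 1)" using step[of 0] len by simp
    ultimately have "cs ! 1 = c" using centre by blast
    moreover have "1 < length cs - 1" "length cs - 1 < length cs" using len by linarith+
    ultimately have "cs ! (length cs - 1) \<noteq> c" using ne[of 1 "length cs - 1"] by auto
    moreover have "adj E (cs ! (length cs - 1)) (cs ! 0)"
      using close \<open>cs \<noteq> []\<close> by (simp add: hd_conv_nth last_conv_nth)
    ultimately show False using centre \<open>cs ! 0 \<noteq> c\<close> by blast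
  qed
qed

definition star_edges :: "'a \<Rightarrow> 'a set \<Rightarrow> 'a set set" where
  "star_edges c V = {{c, x} | x. x \<in> V \<and> x \<noteq> c}"

lemma is_tree_star:
  assumes "finite V" and "c \<in> V"
  shows "is_tree V (star_edges c V)"
proof -
  have "sgraph V (star_edges c V)"
    using assms by (auto simp: sgraph_def star_edges_def)
  moreover have "(adj (star_edges c V))\<^sup>*\<^sup>* x y" if "x \<in> V" "y \<in> V" for x y
  proof -
    have "adj (star_edges c V) x c \<or> x = c" "adj (star_edges c V) c y \<or> y = c"
      using that by (auto simp: adj_def star_edges_def insert_commute)
    then show ?thesis by (metis rtranclp.rtrancl_refl converse_rtranclp_into_rtranclp)
  qed
  moreover have "acyclic_graph V (star_edges c V)"
    by (rule acyclic_graph_if_edges_meet_vertex) (auto simp: star_edges_def)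
  ultimately show ?thesis
    using assms by (auto simp: is_tree_def connected_graph_def)
qed

lemma num_leaves_le_card: "finite V \<Longrightarrow> num_leaves V E \<le> card V"
  unfolding num_leaves_def by (intro card_mono) auto

lemma max_degree_regular:
  assumes "V \<noteq> {}" and "\<And>v. v \<in> V \<Longrightarrow> degree V E v = d"
  shows "max_degree V E = d"
proof -
  have "degree V E ` V = {d}" using assms by auto
  then show ?thesis by (simp add: max_degree_def)
qed

lemma sgraph_edge_neq:
  assumes "sgraph V E" and "{u, v} \<in> E"
  shows "u \<noteq> v"
proof -
  obtain x y where "x \<noteq> y" "{u, v} = {x, y}"
    using assms unfolding sgraph_def by blast
  then show ?thesis by (auto simp: doubleton_eq_iff)
qed

text \<open>The image of the centre has a neighbour, and by counting every vertex of \<open>G\<close> is an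
  image, in particular of some leaf, whose edge to the centre is then sent onto an edge.\<close>
lemma not_packs_spanning_star:
  assumes G: "sgraph VG EG" and no_isolated: "\<And>v. v \<in> VG \<Longrightarrow> degree VG EG v > 0"
    and card: "card VH = card VG" and c: "c \<in> VH"
    and star: "\<And>x. x \<in> VH \<Longrightarrow> x \<noteq> c \<Longrightarrow> {c, x} \<in> EH"
  shows "\<not> packs VG EG VH EH"
proof
  assume "packs VG EG VH EH"
  then obtain f where inj: "inj_on f VH" and into: "f ` VH \<subseteq> VG"
    and avoid: "\<forall>x\<in>VH. \<forall>y\<in>VH. {x, y} \<in> EH \<longrightarrow> {f x, f y} \<notin> EG"
    unfolding packs_def by blast
  have "finite VG" using G by (simp add: sgraph_def)
  moreover have "card (f ` VH) = card VG" using card_image[OF inj] card by simp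
  ultimately have onto: "f ` VH = VG" using into by (simp add: card_subset_eq)
  have "f c \<in> VG" using c into by blast
  then have "card {u \<in> VG. {u, f c} \<in> EG} > 0"
    using no_isolated by (simp add: degree_def)
  then obtain u where u: "u \<in> VG" "{u, f c} \<in> EG"
    by (metis (no_types, lifting) card_gt_0_iff empty_Collect_eq)
  obtain x where x: "x \<in> VH" "u = f x" using onto u(1) by blast
  have "x \<noteq> c" using sgraph_edge_neq[OF G u(2)] x(2) by blast
  then have "{c, x} \<in> EH" using star x(1) by blast
  then have "{f c, f x} \<notin> EG" using avoid c x(1) by blast
  then show False using u(2) x(2) by (simp add: insert_commute)
qed

text \<open>Vertex \<open>a\<close> lies in the \<open>(a div k)\<close>-th copy of \<open>K\<^sub>k\<close>.\<close>
definition clique_union_edges :: "nat \<Rightarrow> nat \<Rightarrow> nat set set" where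
  "clique_union_edges m k =
     {{a, b} | a b. a < m * k \<and> b < m * k \<and> a \<noteq> b \<and> a div k = b div k}"

lemma clique_union_edges_iff:
  "{u, v} \<in> clique_union_edges m k \<longleftrightarrow> u < m * k \<and> v < m * k \<and> u \<noteq> v \<and> u div k = v div k"
  unfolding clique_union_edges_def by (auto simp: doubleton_eq_iff)

lemma sgraph_clique_union: "sgraph {0..<m * k} (clique_union_edges m k)"
  unfolding sgraph_def clique_union_edges_def by auto

lemma div_eq_iff_mem_block:
  assumes "(k::nat) > 0"
  shows "u div k = q \<longleftrightarrow> u \<in> {q * k ..< q * k + k}"
proof -
  have "u div k = q \<longleftrightarrow> q \<le> u div k \<and> u div k < Suc q" by auto
  also have "\<dots> \<longleftrightarrow> q * k \<le> u \<and> u < Suc q * k"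
    using assms by (simp add: less_eq_div_iff_mult_less_eq div_less_iff_less_mult del: mult_Suc)
  finally show ?thesis by (simp add: add.commute)
qed

lemma degree_clique_union:
  assumes v: "v < m * k"
  shows "degree {0..<m * k} (clique_union_edges m k) v = k - 1"
proof -
  have k: "k > 0" using v by (cases k) auto
  let ?B = "{v div k * k ..< v div k * k + k}"
  have "Suc (v div k) * k \<le> m * k"
    using v k by (intro mult_le_mono1) (simp add: less_mult_imp_div_less Suc_leI)
  then have "?B \<subseteq> {0..<m * k}" by (simp add: subset_eq)
  then have "{u \<in> {0..<m * k}. {u, v} \<in> clique_union_edges m k} = ?B - {v}"
    using v div_eq_iff_mem_block[OF k] by (auto simp: clique_union_edges_iff)
  then have "degree {0..<m * k} (clique_union_edges m k) v = card (?B - {v})"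
    by (simp only: degree_def)
  also have "\<dots> = k - 1"
    using div_eq_iff_mem_block[OF k, of v "v div k"] by (simp add: card_Diff_singleton)
  finally show ?thesis .
qed

theorem proposition10:
  fixes \<epsilon> :: real and r :: nat
  assumes "\<epsilon> > 0" and "r \<ge> 1"
  shows "\<exists>(n::nat) (VG::nat set) EG (VT::nat set) ET.
           sgraph VG EG \<and> card VG = n \<and> max_degree VG EG = r \<and>
           is_tree VT ET \<and> card VT = n \<and>
           3 * real (max_degree VG EG) + real (num_leaves VT ET) - 2 < (1 + \<epsilon>) * real n \<and>
           \<not> packs VG EG VT ET"
proof -
  obtain m :: nat where m: "3 * real r < real m * \<epsilon>"
    using reals_Archimedean3[OF assms(1)] by blast
  define n where "n = m * (r + 1)"
  define V where "V = {0..<n}"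
  define EG where "EG = clique_union_edges m (r + 1)"
  define ET where "ET = star_edges 0 V"
  have "m > 0" using m assms(2) by (cases m) auto
  then have "0 \<in> V" "real m \<le> real n" by (auto simp: V_def n_def)
  have sgraph: "sgraph V EG"
    unfolding V_def EG_def n_def by (rule sgraph_clique_union)
  have degree: "degree V EG v = r" if "v \<in> V" for v
    using that degree_clique_union[of v m "r + 1"] unfolding V_def EG_def n_def by simp
  have max_degree: "max_degree V EG = r"
    using \<open>0 \<in> V\<close> degree by (intro max_degree_regular) auto
  have tree: "is_tree V ET"
    using \<open>0 \<in> V\<close> unfolding ET_def V_def by (simp add: is_tree_star)
  have "\<not> packs V EG V ET"
  proof (rule not_packs_spanning_star[OF sgraph _ refl \<open>0 \<in> V\<close>])
    show "degree V EG v > 0" if "v \<in> V" for v using degree[OF that] assms(2) by simp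
    show "{0, x} \<in> ET" if "x \<in> V" "x \<noteq> 0" for x using that by (auto simp: ET_def star_edges_def)
  qed
  moreover have "real (num_leaves V ET) \<le> real n"
    using num_leaves_le_card[of V ET] by (simp add: V_def)
  moreover have "real m * \<epsilon> \<le> real n * \<epsilon>"
    using \<open>real m \<le> real n\<close> assms(1) by (simp add: mult_right_mono)
  ultimately show ?thesis
    using sgraph max_degree tree m
    by (intro exI[of _ n] exI[of _ V] exI[of _ EG] exI[of _ V] exI[of _ ET])
       (simp add: V_def algebra_simps)
qed

end
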